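(* Let $d$ be a compatible metric on the Cantor space $\mathbf{C}$ and let $h:\mathbf{C}\to\mathbf{C}$ be a homeomorphism which is an isometry such that the orbit $\mathrm{orb}(x,h)$ is nowhere dense in $\mathbf{C}$ for every $x\in\mathbf{C}$. Then there exist $\Phi=(\varphi^L,\varphi^U)$ such that $\mathbf{F}_\Phi$ is a Fraïssé fence and a homeomorphism $\hat h$ of $\mathbf{F}_\Phi$ which is an isometry such that $h$ is a factor of $\hat h$. Moreover, if $\{K_n\}$ is a sequence of closed, $h$-invariant, nowhere dense subsets of $\mathbf{C}$, then $\Phi$ can be chosen so that $\varphi^L=\varphi^U$ on $\bigcup_n K_n$.
   Context: For $\Phi=(\varphi^L,\varphi^U)$ with $\varphi^L,\varphi^U:\mathbf{C}\to[0,1]$, $\varphi^L$ lower semicontinuous, $\varphi^U$ upper semicontinuous, $\varphi^L\le\varphi^U$, the fence is $\mathbf{F}_\Phi=\{(x,t)\in\mathbf{C}\times[0,1]:\varphi^L(x)\le t\le\varphi^U(x)\}$ with the maximum metric of $\mathbf{C}\times[0,1]$, and $\mathbf{F}_\Phi(x)=\{t:(x,t)\in\mathbf{F}_\Phi\}$. $\mathbf{F}_\Phi$ is a Fraïssé fence if for every $x\in\mathbf{C}$ and every continuum $I\subseteq\mathbf{F}_\Phi(x)$ there is a sequence $x_k\in\mathbf{C}\setminus\{x\}$ converging to $x$ such that each $\mathbf{F}_\Phi(x_k)$ is a nondegenerate arc and $\mathbf{F}_\Phi(x_k)\to I$ in the Hausdorff metric. *)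

theory Defs
  imports "HOL-Analysis.Analysis"
begin

type_synonym cantor = "nat \<Rightarrow> bool"

definition cantor_top :: "cantor topology" where
  "cantor_top = product_topology (\<lambda>_. discrete_topology (UNIV :: bool set)) UNIV"

definition compatible_metric :: "(cantor \<Rightarrow> cantor \<Rightarrow> real) \<Rightarrow> bool" where
  "compatible_metric d \<longleftrightarrow> Metric_space UNIV d \<and> Metric_space.mtopology UNIV d = cantor_top"

definition nowhere_dense_in :: "'a topology \<Rightarrow> 'a set \<Rightarrow> bool" where
  "nowhere_dense_in X S \<longleftrightarrow> X interior_of (X closure_of S) = {}"

definition orb :: "'a \<Rightarrow> ('a \<Rightarrow> 'a) \<Rightarrow> 'a set" where
  "orb x h = {(h ^^ n) x | n. True}"

definition lsc_on :: "'a topology \<Rightarrow> ('a \<Rightarrow> real) \<Rightarrow> bool" where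
  "lsc_on X f \<longleftrightarrow> (\<forall>a. openin X {x \<in> topspace X. a < f x})"

definition usc_on :: "'a topology \<Rightarrow> ('a \<Rightarrow> real) \<Rightarrow> bool" where
  "usc_on X f \<longleftrightarrow> (\<forall>a. openin X {x \<in> topspace X. f x < a})"

definition admissible :: "(cantor \<Rightarrow> real) \<Rightarrow> (cantor \<Rightarrow> real) \<Rightarrow> bool" where
  "admissible phiL phiU \<longleftrightarrow>
     (\<forall>x. 0 \<le> phiL x \<and> phiL x \<le> 1 \<and> 0 \<le> phiU x \<and> phiU x \<le> 1) \<and>
     lsc_on cantor_top phiL \<and> usc_on cantor_top phiU \<and> (\<forall>x. phiL x \<le> phiU x)"

definition fence :: "(cantor \<Rightarrow> real) \<Rightarrow> (cantor \<Rightarrow> real) \<Rightarrow> (cantor \<times> real) set" where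
  "fence phiL phiU = {(x, t). t \<in> {0..1} \<and> phiL x \<le> t \<and> t \<le> phiU x}"

definition fence_fiber :: "(cantor \<Rightarrow> real) \<Rightarrow> (cantor \<Rightarrow> real) \<Rightarrow> cantor \<Rightarrow> real set" where
  "fence_fiber phiL phiU x = {t. (x, t) \<in> fence phiL phiU}"

definition max_dist :: "(cantor \<Rightarrow> cantor \<Rightarrow> real) \<Rightarrow> cantor \<times> real \<Rightarrow> cantor \<times> real \<Rightarrow> real" where
  "max_dist d p q = max (d (fst p) (fst q)) \<bar>snd p - snd q\<bar>"

definition fence_top :: "(cantor \<Rightarrow> cantor \<Rightarrow> real) \<Rightarrow> (cantor \<Rightarrow> real) \<Rightarrow> (cantor \<Rightarrow> real)
    \<Rightarrow> (cantor \<times> real) topology" where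
  "fence_top d phiL phiU = Metric_space.mtopology (fence phiL phiU) (max_dist d)"

text \<open>Hausdorff distance between (nonempty bounded) sets of reals.\<close>
definition hausdist :: "real set \<Rightarrow> real set \<Rightarrow> real" where
  "hausdist A B = max (SUP a\<in>A. infdist a B) (SUP b\<in>B. infdist b A)"

definition continuum :: "real set \<Rightarrow> bool" where
  "continuum S \<longleftrightarrow> S \<noteq> {} \<and> compact S \<and> connected S"

definition nondegenerate_arc :: "real set \<Rightarrow> bool" where
  "nondegenerate_arc S \<longleftrightarrow> (\<exists>g. arc g \<and> path_image g = S)"

definition fraisse_fence :: "(cantor \<Rightarrow> real) \<Rightarrow> (cantor \<Rightarrow> real) \<Rightarrow> bool" where
  "fraisse_fence phiL phiU \<longleftrightarrow>
    (\<forall>x I. continuum I \<and> I \<subseteq> fence_fiber phiL phiU x \<longrightarrow>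
       (\<exists>xs :: nat \<Rightarrow> cantor. (\<forall>k. xs k \<noteq> x) \<and> limitin cantor_top xs x sequentially \<and>
          (\<forall>k. nondegenerate_arc (fence_fiber phiL phiU (xs k))) \<and>
          (\<lambda>k. hausdist (fence_fiber phiL phiU (xs k)) I) \<longlonglongrightarrow> 0))"

definition is_factor :: "(cantor \<times> real) topology \<Rightarrow> ((cantor \<times> real) \<Rightarrow> (cantor \<times> real))
    \<Rightarrow> (cantor \<Rightarrow> cantor) \<Rightarrow> bool" where
  "is_factor F hh h \<longleftrightarrow> (\<exists>pi. continuous_map F cantor_top pi \<and> pi ` topspace F = UNIV \<and>
      (\<forall>p \<in> topspace F. pi (hh p) = h (pi p)))"

end

(*
  An isometry h of a compact metric space is recurrent, so closed forward-invariant sets are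
  invariant and the saturation of a clopen set under h is clopen and invariant. Since orbits
  are nowhere dense, every nonempty invariant clopen set splits into two such sets. Iterating
  this gives a refining sequence of partitions of C into invariant clopen pieces, and every
  point x receives a code at each level. The codes drive nested intervals in [0, 1]: at the
  even level 2i code 0 halves the interval (this is forced on K_0, ..., K_i), and every other
  code selects a subinterval with endpoints on a grid of mesh 1/(i + 2); all codes occur in
  every piece of the previous partition. phiL and phiU are the limits of the endpoints; they
  are semicontinuous because the intervals are locally constant, and they agree on each K_k.
  The odd levels record which cylinders the orbit of a point visits, so a point whose
  interval is a prescribed grid interval can be moved along its orbit into any cylinder
  around x without changing its codes; this gives the Fraisse property. All codes are
  h-invariant, hence h x id maps the fence isometrically onto itself, with h as a factor via
  the first projection.
*)

theory Submission
  imports Defs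
begin

lemma nowhere_dense_in_open_subset:
  assumes "nowhere_dense_in X S" "openin X U" "U \<subseteq> X closure_of S"
  shows "U = {}"
  using assms interior_of_maximal unfolding nowhere_dense_in_def by blast

section \<open>Isometries of compact metric spaces\<close>

context Metric_space
begin

lemma isometry_recurrent:
  assumes "compact_space mtopology" "h ` M \<subseteq> M"
    and iso: "\<And>x y. x \<in> M \<Longrightarrow> y \<in> M \<Longrightarrow> d (h x) (h y) = d x y"
    and "x \<in> M" "e > 0"
  shows "\<exists>n\<ge>1. d x ((h ^^ n) x) < e"
proof -
  have iter_M: "(h ^^ n) y \<in> M" if "y \<in> M" for n y
    using that assms(2) by (induction n) auto
  have iter_iso: "d ((h ^^ n) y) ((h ^^ n) z) = d y z" if "y \<in> M" "z \<in> M" for n y z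
    using that by (induction n) (auto simp: iso iter_M)
  have "range (\<lambda>n. (h ^^ n) x) \<subseteq> M"
    using iter_M \<open>x \<in> M\<close> by blast
  then have "\<exists>l r. l \<in> M \<and> strict_mono r \<and>
      limitin mtopology ((\<lambda>n. (h ^^ n) x) \<circ> r) l sequentially"
    using assms(1) unfolding compact_space_sequentially by simp
  then obtain l r where l: "l \<in> M" and r: "strict_mono r"
    and lim: "limitin mtopology ((\<lambda>n. (h ^^ n) x) \<circ> r) l sequentially"
    by blast
  obtain N where N: "\<And>n. n \<ge> N \<Longrightarrow> d ((h ^^ r n) x) l < e / 2"
    using lim \<open>e > 0\<close> unfolding limit_metric_sequentially comp_def
    by (meson half_gt_zero)
  define i j where "i = r N" and "j = r (Suc N)"
  have "i < j"
    using r unfolding i_def j_def strict_mono_def by blast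
  have "d ((h ^^ i) x) ((h ^^ j) x) < e"
    using N[of N] N[of "Suc N"] triangle'[of "(h ^^ i) x" l "(h ^^ j) x"] iter_M[OF \<open>x \<in> M\<close>] l
    unfolding i_def j_def by (simp add: commute[of l])
  moreover have "(h ^^ j) x = (h ^^ i) ((h ^^ (j - i)) x)"
    using \<open>i < j\<close> funpow_add[of i "j - i" h] by simp
  ultimately have "d x ((h ^^ (j - i)) x) < e"
    using iter_iso[of x "(h ^^ (j - i)) x" i] iter_M \<open>x \<in> M\<close> by simp
  then show ?thesis
    using \<open>i < j\<close> by (intro exI[of _ "j - i"]) auto
qed

lemma isometry_backward_invariant:
  assumes "compact_space mtopology" "h ` M \<subseteq> M"
    and iso: "\<And>x y. x \<in> M \<Longrightarrow> y \<in> M \<Longrightarrow> d (h x) (h y) = d x y"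
    and "closedin mtopology C" "h ` C \<subseteq> C" "x \<in> M" "h x \<in> C"
  shows "x \<in> C"
proof (rule ccontr)
  assume "x \<notin> C"
  moreover have "openin mtopology (M - C)"
    using assms(4) by (simp add: closedin_def)
  ultimately obtain r where "r > 0" and r: "mball x r \<subseteq> M - C"
    using assms(6) unfolding openin_mtopology by blast
  have hx: "h x \<in> M"
    using assms(2,6) by blast
  obtain n where "n \<ge> 1" and n: "d (h x) ((h ^^ n) (h x)) < r"
    using isometry_recurrent[OF assms(1,2) iso hx \<open>r > 0\<close>] by blast
  have iter_M: "(h ^^ k) y \<in> M" if "y \<in> M" for k y
    using that assms(2) by (induction k) auto
  have "(h ^^ k) y \<in> C" if "y \<in> C" for k y
    using that assms(5) by (induction k) auto
  then have "(h ^^ n) x \<in> C"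
    using \<open>n \<ge> 1\<close> assms(7) funpow_Suc_right[of "n - 1" h] by simp
  moreover have "d x ((h ^^ n) x) < r"
    using n iso[OF assms(6) iter_M[OF assms(6)]] by (simp add: funpow_swap1)
  ultimately show False
    using r iter_M[OF assms(6), of n] assms(6) by auto
qed

lemma clopen_iff_uniformly_locally_constant:
  assumes "compact_space mtopology" "S \<subseteq> M"
  shows "openin mtopology S \<and> closedin mtopology S \<longleftrightarrow>
    (\<exists>\<eta>>0. \<forall>x\<in>M. \<forall>y\<in>M. d x y < \<eta> \<longrightarrow> (x \<in> S \<longleftrightarrow> y \<in> S))"
proof
  assume "openin mtopology S \<and> closedin mtopology S"
  then have "\<And>U. U \<in> {S, M - S} \<Longrightarrow> openin mtopology U"
    by (auto simp: closedin_def)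
  moreover have "compactin mtopology M"
    using assms(1) by (simp add: compact_space_def)
  ultimately have "\<exists>\<eta>>0. \<forall>x\<in>M. \<exists>U\<in>{S, M - S}. mball x \<eta> \<subseteq> U"
    by (intro lebesgue_number) auto
  then obtain \<eta> where "\<eta> > 0" and \<eta>: "\<forall>x\<in>M. \<exists>U\<in>{S, M - S}. mball x \<eta> \<subseteq> U"
    by blast
  have "x \<in> S \<longleftrightarrow> y \<in> S" if "x \<in> M" "y \<in> M" "d x y < \<eta>" for x y
  proof -
    obtain U where "U \<in> {S, M - S}" "mball x \<eta> \<subseteq> U"
      using \<eta> \<open>x \<in> M\<close> by blast
    moreover have "x \<in> mball x \<eta>" "y \<in> mball x \<eta>"
      using that \<open>\<eta> > 0\<close> by auto
    ultimately show ?thesis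
      by blast
  qed
  with \<open>\<eta> > 0\<close> show "\<exists>\<eta>>0. \<forall>x\<in>M. \<forall>y\<in>M. d x y < \<eta> \<longrightarrow> (x \<in> S \<longleftrightarrow> y \<in> S)"
    by blast
next
  assume "\<exists>\<eta>>0. \<forall>x\<in>M. \<forall>y\<in>M. d x y < \<eta> \<longrightarrow> (x \<in> S \<longleftrightarrow> y \<in> S)"
  then obtain \<eta> where "\<eta> > 0" and \<eta>: "\<And>x y. x \<in> M \<Longrightarrow> y \<in> M \<Longrightarrow> d x y < \<eta> \<Longrightarrow> x \<in> S \<longleftrightarrow> y \<in> S"
    by blast
  have "mball x \<eta> \<subseteq> S" if "x \<in> S" for x
    using that assms(2) \<eta> by auto
  moreover have "mball x \<eta> \<subseteq> M - S" if "x \<in> M - S" for x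
    using that \<eta> by auto
  ultimately show "openin mtopology S \<and> closedin mtopology S"
    using \<open>\<eta> > 0\<close> assms(2) unfolding closedin_def openin_mtopology by auto
qed

end

section \<open>Intervals and grids\<close>

lemma infdist_le_interval_endpoint_dist:
  fixes a b s t u :: real
  assumes "a \<le> u" "u \<le> b" "s \<le> t"
  shows "infdist u {s..t} \<le> max \<bar>a - s\<bar> \<bar>b - t\<bar>"
proof -
  have "infdist u {s..t} \<le> dist u (min t (max s u))"
    using assms(3) by (intro infdist_le) auto
  also have "\<dots> \<le> max \<bar>a - s\<bar> \<bar>b - t\<bar>"
    using assms by (auto simp: dist_real_def min_def max_def abs_if)
  finally show ?thesis .
qed

lemma hausdist_interval_le:
  fixes a b s t :: real
  assumes "a \<le> b" "s \<le> t"
  shows "0 \<le> hausdist {a..b} {s..t}" "hausdist {a..b} {s..t} \<le> max \<bar>a - s\<bar> \<bar>b - t\<bar>"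
proof -
  define D where "D = max \<bar>a - s\<bar> \<bar>b - t\<bar>"
  have le1: "infdist u {s..t} \<le> D" if "u \<in> {a..b}" for u
    using infdist_le_interval_endpoint_dist that assms(2) unfolding D_def by simp
  have le2: "infdist u {a..b} \<le> D" if "u \<in> {s..t}" for u
    using infdist_le_interval_endpoint_dist[of s u t a b] that assms(1)
    unfolding D_def by (simp add: abs_minus_commute)
  have "(SUP u\<in>{a..b}. infdist u {s..t}) \<le> D" "(SUP u\<in>{s..t}. infdist u {a..b}) \<le> D"
    using le1 le2 assms by (auto intro!: cSUP_least)
  then show "hausdist {a..b} {s..t} \<le> D"
    unfolding hausdist_def by simp
  have "bdd_above ((\<lambda>u. infdist u {s..t}) ` {a..b})"
    using le1 by (intro bdd_aboveI2[where M = D]) auto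
  then have "infdist a {s..t} \<le> (SUP u\<in>{a..b}. infdist u {s..t})"
    using assms(1) by (intro cSUP_upper) auto
  then show "0 \<le> hausdist {a..b} {s..t}"
    unfolding hausdist_def using infdist_nonneg[of a "{s..t}"] by linarith
qed

lemma hausdist_intervals_tendsto_0:
  fixes a b :: "nat \<Rightarrow> real"
  assumes "\<And>k. a k \<le> b k" "s \<le> t"
    and "\<And>k. \<bar>a k - s\<bar> \<le> 1 / Suc k" "\<And>k. \<bar>b k - t\<bar> \<le> 1 / Suc k"
  shows "(\<lambda>k. hausdist {a k..b k} {s..t}) \<longlonglongrightarrow> 0"
proof (rule tendsto_sandwich[OF _ _ tendsto_const LIMSEQ_inverse_real_of_nat])
  show "\<forall>\<^sub>F k in sequentially. 0 \<le> hausdist {a k..b k} {s..t}"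
    using hausdist_interval_le(1)[OF assms(1,2)] by simp
  have "hausdist {a k..b k} {s..t} \<le> inverse (Suc k)" for k
  proof -
    have "max \<bar>a k - s\<bar> \<bar>b k - t\<bar> \<le> inverse (Suc k)"
      using assms(3,4)[of k] by (simp add: inverse_eq_divide)
    then show ?thesis
      using hausdist_interval_le(2)[OF assms(1,2), of k] by linarith
  qed
  then show "\<forall>\<^sub>F k in sequentially. hausdist {a k..b k} {s..t} \<le> inverse (Suc k)"
    by simp
qed

lemma grid_points_near:
  fixes u v :: real
  assumes "0 \<le> u" "u \<le> v" "v \<le> m" "1 \<le> m"
  obtains p r :: nat where "p < r" "r \<le> m" "\<bar>p - u\<bar> \<le> 1" "\<bar>r - v\<bar> \<le> 1"
proof -
  define p where "p = min (nat \<lfloor>u\<rfloor>) (m - 1)"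
  define r where "r = max (Suc p) (nat \<lceil>v\<rceil>)"
  have floor: "real (nat \<lfloor>u\<rfloor>) \<le> u" "u < real (nat \<lfloor>u\<rfloor>) + 1"
    using assms(1) by linarith+
  have ceiling: "v \<le> real (nat \<lceil>v\<rceil>)" "real (nat \<lceil>v\<rceil>) < v + 1" "nat \<lceil>v\<rceil> \<le> m"
    using assms by (linarith, linarith, simp add: nat_le_iff ceiling_le_iff)
  have "real p \<le> u \<and> u \<le> real p + 1"
  proof (cases "nat \<lfloor>u\<rfloor> \<le> m - 1")
    case True
    then show ?thesis
      using floor unfolding p_def by simp
  next
    case False
    then have "real m \<le> real (nat \<lfloor>u\<rfloor>)" "real p = real m - 1"
      using assms(4) unfolding p_def by (simp_all add: of_nat_diff)
    then show ?thesis
      using floor assms(2,3) by linarith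
  qed
  then have "real p \<le> u" "u \<le> real p + 1"
    by simp_all
  moreover have "p < r" "r \<le> m"
    using assms ceiling(3) unfolding r_def p_def by auto
  moreover have "\<bar>r - v\<bar> \<le> 1"
  proof (cases "Suc p \<le> nat \<lceil>v\<rceil>")
    case True
    then show ?thesis
      using ceiling(1,2) unfolding r_def by (simp add: max_def)
  next
    case False
    then have "v \<le> real p"
      by (simp add: not_less_eq_eq)
    moreover have "r = Suc p"
      using False unfolding r_def by (simp add: max_def)
    ultimately show ?thesis
      using \<open>real p \<le> u\<close> \<open>u \<le> v\<close> by simp
  qed
  ultimately show thesis
    using that by auto
qed

lemma grid_interval_approx:
  fixes a b s t :: real
  assumes "a < b" "a \<le> s" "s \<le> t" "t \<le> b" "1 \<le> m"
  obtains p r :: nat where "p < r" "r \<le> m"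
    "\<bar>a + (b - a) * p / m - s\<bar> \<le> (b - a) / m" "\<bar>a + (b - a) * r / m - t\<bar> \<le> (b - a) / m"
proof -
  define q where "q = (b - a) / m"
  have "q > 0"
    using assms by (simp add: q_def)
  define u v where "u = (s - a) / q" and "v = (t - a) / q"
  have "real m * q = b - a"
    using assms(5) by (simp add: q_def)
  then have "0 \<le> u" "u \<le> v" "v \<le> m"
    using assms \<open>q > 0\<close> pos_divide_le_eq[OF \<open>q > 0\<close>]
    by (simp_all add: u_def v_def divide_right_mono mult.commute)
  then obtain p r :: nat where pr: "p < r" "r \<le> m" "\<bar>p - u\<bar> \<le> 1" "\<bar>r - v\<bar> \<le> 1"
    using grid_points_near assms(5) by blast
  have "q * u = s - a" "q * v = t - a"
    using \<open>q > 0\<close> by (simp_all add: u_def v_def)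
  moreover have "(b - a) * p / m = q * p" "(b - a) * r / m = q * r"
    by (simp_all add: q_def)
  ultimately have "a + (b - a) * p / m - s = q * (p - u)" "a + (b - a) * r / m - t = q * (r - v)"
    by (simp_all add: right_diff_distrib)
  then have "\<bar>a + (b - a) * p / m - s\<bar> = q * \<bar>p - u\<bar>" "\<bar>a + (b - a) * r / m - t\<bar> = q * \<bar>r - v\<bar>"
    using \<open>q > 0\<close> by (simp_all add: abs_mult)
  moreover have "q * \<bar>p - u\<bar> \<le> q" "q * \<bar>r - v\<bar> \<le> q"
    using pr(3,4) \<open>q > 0\<close> by (simp_all add: mult_left_le)
  ultimately show thesis
    using that[OF pr(1,2)] unfolding q_def by simp
qed

text \<open>Code \<open>0\<close> halves the interval; the code \<open>grid_code m p r\<close> with \<open>p < r \<le> m\<close> selects the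
  subinterval between the grid points \<open>p\<close> and \<open>r\<close> of mesh \<open>(b - a) / m\<close>; all other codes, among
  them \<open>1\<close> and \<open>2\<close>, leave the interval unchanged.\<close>

definition grid_code :: "nat \<Rightarrow> nat \<Rightarrow> nat \<Rightarrow> nat" where
  "grid_code m p r = Suc (p + Suc m * r)"

fun shrink :: "nat \<Rightarrow> nat \<Rightarrow> real \<times> real \<Rightarrow> real \<times> real" where
  "shrink m c (a, b) =
    (if c = 0 then (a, (a + b) / 2)
     else let p = (c - 1) mod Suc m; r = (c - 1) div Suc m in
       if p < r \<and> r \<le> m then (a + (b - a) * p / m, a + (b - a) * r / m) else (a, b))"

lemma grid_code_le:
  assumes "p \<le> m" "r \<le> m"
  shows "grid_code m p r \<le> (Suc m)\<^sup>2"
  using assms mult_le_mono2[of r m "Suc m"] unfolding grid_code_def power2_eq_square by simp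

lemma shrink_grid_code:
  assumes "p < r" "r \<le> m"
  shows "shrink m (grid_code m p r) (a, b) = (a + (b - a) * p / m, a + (b - a) * r / m)"
proof -
  have "p < Suc m"
    using assms by simp
  then have "(p + Suc m * r) mod Suc m = p" "(p + Suc m * r) div Suc m = r"
    by (simp_all del: mult_Suc)
  then show ?thesis
    using assms by (simp add: grid_code_def Let_def)
qed

lemma shrink_keep: "c \<in> {1, 2} \<Longrightarrow> shrink m c ab = ab"
  by (cases ab; cases m) (auto simp: Let_def)

lemma shrink_0: "shrink m 0 ab = (fst ab, (fst ab + snd ab) / 2)"
  by (cases ab) simp

lemma shrink_nested:
  assumes "fst ab < snd ab"
  shows "fst ab \<le> fst (shrink m c ab) \<and> fst (shrink m c ab) < snd (shrink m c ab) \<and>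
    snd (shrink m c ab) \<le> snd ab"
proof -
  obtain a b a' b' where ab: "ab = (a, b)" and a'b': "shrink m c (a, b) = (a', b')"
    by (metis surj_pair)
  define p r where "p = (c - 1) mod Suc m" and "r = (c - 1) div Suc m"
  have "a \<le> a' \<and> a' < b' \<and> b' \<le> b"
  proof (cases "c \<noteq> 0 \<and> p < r \<and> r \<le> m")
    case True
    then have a'b': "a' = a + (b - a) / m * p" "b' = a + (b - a) / m * r" and "real m > 0"
      using a'b' by (auto simp: p_def r_def Let_def)
    then have q: "(b - a) / m > 0" "(b - a) / m * m = b - a"
      using assms ab by simp_all
    have "(b - a) / m * p < (b - a) / m * r"
      using True q(1) by (intro mult_strict_left_mono) simp_all
    moreover have "(b - a) / m * r \<le> (b - a) / m * m"
      using True q(1) by (intro mult_left_mono) simp_all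
    moreover have "0 \<le> (b - a) / m * p"
      using q(1) by (intro mult_nonneg_nonneg) simp_all
    ultimately show ?thesis
      unfolding a'b' using q(2) by linarith
  next
    case False
    then show ?thesis
      using assms ab a'b' by (auto simp: p_def r_def Let_def split: if_splits)
  qed
  then show ?thesis
    using ab a'b' by simp
qed

section \<open>Clopen sets and cylinders of the Cantor space\<close>

definition clopen :: "cantor set \<Rightarrow> bool" where
  "clopen S \<longleftrightarrow> openin cantor_top S \<and> closedin cantor_top S"

lemma clopen_empty [simp]: "clopen {}"
  by (simp add: clopen_def)

lemma clopen_Int: "clopen A \<Longrightarrow> clopen B \<Longrightarrow> clopen (A \<inter> B)"
  by (auto simp: clopen_def)

lemma clopen_Diff: "clopen A \<Longrightarrow> clopen B \<Longrightarrow> clopen (A - B)"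
  by (auto simp: clopen_def)

lemma topspace_cantor_top [simp]: "topspace cantor_top = UNIV"
  by (simp add: cantor_top_def)

lemma clopen_UNIV [simp]: "clopen UNIV"
  by (metis clopen_def closedin_topspace openin_topspace topspace_cantor_top)

lemma compact_space_cantor_top: "compact_space cantor_top"
  unfolding cantor_top_def
  by (simp add: compact_space_product_topology compact_space_discrete_topology)

definition cylinder :: "bool list \<Rightarrow> cantor set" where
  "cylinder bs = {x. \<forall>i<length bs. x i = bs ! i}"

lemma mem_cylinder_prefix [simp]: "x \<in> cylinder (map x [0..<n])"
  by (simp add: cylinder_def)

lemma clopen_cylinder: "clopen (cylinder bs)"
proof -
  have coordinate: "openin cantor_top {x. x i = b} \<and> closedin cantor_top {x. x i = b}" for i b
  proof -
    have proj: "continuous_map cantor_top (discrete_topology UNIV) (\<lambda>x. x i)"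
      unfolding cantor_top_def by (rule continuous_map_product_projection) simp
    show ?thesis
      using openin_continuous_map_preimage[OF proj, of "{b}"]
        closedin_continuous_map_preimage[OF proj, of "{b}"] by simp
  qed
  define \<F> where "\<F> = insert UNIV ((\<lambda>i. {x. x i = bs ! i}) ` {..<length bs})"
  have "cylinder bs = \<Inter>\<F>"
    by (auto simp: cylinder_def \<F>_def)
  moreover have "finite \<F>" "\<F> \<noteq> {}"
    by (simp_all add: \<F>_def)
  moreover have "openin cantor_top F" "closedin cantor_top F" if "F \<in> \<F>" for F
    using that coordinate openin_topspace[of cantor_top] closedin_topspace[of cantor_top]
    unfolding \<F>_def by auto
  ultimately show ?thesis
    unfolding clopen_def by (metis openin_Inter closedin_Inter)
qed

lemma cylinder_subset_open:
  assumes "openin cantor_top U" "x \<in> U"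
  shows "\<exists>n. cylinder (map x [0..<n]) \<subseteq> U"
proof -
  obtain V where V: "finite {i. V i \<noteq> UNIV}" "x \<in> Pi\<^sub>E UNIV V" "Pi\<^sub>E UNIV V \<subseteq> U"
    using assms unfolding cantor_top_def openin_product_topology_alt by auto
  then obtain n where n: "{i. V i \<noteq> UNIV} \<subseteq> {..<n}"
    using finite_nat_bounded by blast
  have "y \<in> Pi\<^sub>E UNIV V" if "y \<in> cylinder (map x [0..<n])" for y
  proof -
    have "y i \<in> V i" for i
    proof (cases "V i = UNIV")
      case False
      then have "i < n"
        using n by blast
      then have "y i = x i"
        using that by (simp add: cylinder_def)
      then show ?thesis
        using V(2) by (simp add: PiE_iff)
    qed simp
    then show ?thesis
      by (simp add: PiE_iff)
  qed
  then show ?thesis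
    using V(3) by blast
qed

section \<open>Invariant clopen sets\<close>

locale isometric_cantor_system = Metric_space "UNIV :: cantor set" d
  for d :: "cantor \<Rightarrow> cantor \<Rightarrow> real" +
  fixes h :: "cantor \<Rightarrow> cantor"
  assumes mtopology_eq_cantor_top: "mtopology = cantor_top"
    and homeomorphic_h: "homeomorphic_map cantor_top cantor_top h"
    and isometric_h: "d (h x) (h y) = d x y"
    and orbit_nowhere_dense: "nowhere_dense_in cantor_top (orb x h)"
begin

lemma compact_space_mtopology: "compact_space mtopology"
  by (simp add: mtopology_eq_cantor_top compact_space_cantor_top)

lemma surj_h: "surj h"
  using homeomorphic_imp_surjective_map[OF homeomorphic_h] by simp

lemma isometric_iterate: "d ((h ^^ n) x) ((h ^^ n) y) = d x y"
  by (induction n) (simp_all add: isometric_h)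

lemma recurrent:
  assumes "e > 0"
  obtains n where "d x ((h ^^ Suc n) x) < e"
proof -
  obtain n where "n \<ge> 1" "d x ((h ^^ n) x) < e"
    using isometry_recurrent[OF compact_space_mtopology] isometric_h assms by blast
  then show thesis
    using that[of "n - 1"] by simp
qed

lemma clopen_iff_uniform: "clopen S \<longleftrightarrow> (\<exists>\<eta>>0. \<forall>x y. d x y < \<eta> \<longrightarrow> (x \<in> S \<longleftrightarrow> y \<in> S))"
  using clopen_iff_uniformly_locally_constant[OF compact_space_mtopology]
  by (simp add: clopen_def mtopology_eq_cantor_top)

lemma open_mball: "openin cantor_top (mball x r)"
  using openin_mball mtopology_eq_cantor_top by metis

definition invariant :: "cantor set \<Rightarrow> bool" where
  "invariant S \<longleftrightarrow> (\<forall>x. h x \<in> S \<longleftrightarrow> x \<in> S)"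

lemma invariant_empty [simp]: "invariant {}"
  by (simp add: invariant_def)

lemma invariant_UNIV [simp]: "invariant UNIV"
  by (simp add: invariant_def)

lemma invariant_Int: "invariant A \<Longrightarrow> invariant B \<Longrightarrow> invariant (A \<inter> B)"
  by (simp add: invariant_def)

lemma invariant_Diff: "invariant A \<Longrightarrow> invariant B \<Longrightarrow> invariant (A - B)"
  by (simp add: invariant_def)

lemma invariant_iterate: "invariant S \<Longrightarrow> (h ^^ n) x \<in> S \<longleftrightarrow> x \<in> S"
  by (induction n) (simp_all add: invariant_def)

lemma invariant_if_closed_forward_invariant:
  assumes "closedin cantor_top C" "h ` C \<subseteq> C"
  shows "invariant C"
  unfolding invariant_def
proof (intro allI iffI)
  fix x
  assume "h x \<in> C"
  then show "x \<in> C"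
    using isometry_backward_invariant[OF compact_space_mtopology _ _ _ assms(2)]
      assms(1) isometric_h by (simp add: mtopology_eq_cantor_top)
qed (use assms(2) in blast)

lemma invariant_orbit_closure: "invariant (cantor_top closure_of orb x h)"
proof (rule invariant_if_closed_forward_invariant)
  have "h ` orb x h \<subseteq> orb x h"
    unfolding orb_def by (auto intro: exI[of _ "Suc _"])
  have "h ` (cantor_top closure_of orb x h) \<subseteq> cantor_top closure_of (h ` orb x h)"
    by (rule continuous_map_image_closure_subset[OF homeomorphic_imp_continuous_map[OF homeomorphic_h]])
  also have "\<dots> \<subseteq> cantor_top closure_of orb x h"
    by (rule closure_of_mono) fact
  finally show "h ` (cantor_top closure_of orb x h) \<subseteq> cantor_top closure_of orb x h" .
qed simp

lemma mem_orbit_closure: "x \<in> cantor_top closure_of orb x h"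
  using closure_of_subset[of "orb x h" cantor_top] unfolding orb_def by (force intro: exI[of _ 0])

lemma clopen_neighbourhood:
  assumes "openin cantor_top U" "x \<in> U"
  obtains W where "clopen W" "x \<in> W" "W \<subseteq> U"
  using cylinder_subset_open[OF assms] clopen_cylinder mem_cylinder_prefix by blast

text \<open>Since \<open>h\<close> is recurrent, the forward saturation of a clopen set is already invariant.\<close>

definition saturation :: "cantor set \<Rightarrow> cantor set" where
  "saturation W = {x. \<exists>n. (h ^^ n) x \<in> W}"

lemma subset_saturation: "W \<subseteq> saturation W"
  unfolding saturation_def by (auto intro: exI[of _ 0])

lemma saturation_subset: "invariant U \<Longrightarrow> W \<subseteq> U \<Longrightarrow> saturation W \<subseteq> U"
  unfolding saturation_def using invariant_iterate by blast

lemma clopen_saturation: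
  assumes "clopen W"
  shows "clopen (saturation W)"
proof -
  obtain \<eta> where "\<eta> > 0" and \<eta>: "\<And>x y. d x y < \<eta> \<Longrightarrow> x \<in> W \<longleftrightarrow> y \<in> W"
    using assms clopen_iff_uniform by blast
  have "(h ^^ n) x \<in> W \<longleftrightarrow> (h ^^ n) y \<in> W" if "d x y < \<eta>" for x y n
    using \<eta>[of "(h ^^ n) x" "(h ^^ n) y"] that by (simp add: isometric_iterate)
  then have "x \<in> saturation W \<longleftrightarrow> y \<in> saturation W" if "d x y < \<eta>" for x y
    using that unfolding saturation_def by blast
  with \<open>\<eta> > 0\<close> show ?thesis
    using clopen_iff_uniform by blast
qed

lemma invariant_saturation:
  assumes "clopen W"
  shows "invariant (saturation W)"
  unfolding invariant_def
proof (intro allI iffI)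
  fix x
  assume "h x \<in> saturation W"
  then obtain n where "(h ^^ n) (h x) \<in> W"
    unfolding saturation_def by blast
  then have "(h ^^ Suc n) x \<in> W"
    by (simp add: funpow_swap1)
  then show "x \<in> saturation W"
    unfolding saturation_def by blast
next
  fix x
  assume "x \<in> saturation W"
  then obtain n where n: "(h ^^ n) x \<in> W"
    unfolding saturation_def by blast
  have "\<exists>k. (h ^^ Suc k) x \<in> W"
  proof (cases n)
    case 0
    obtain \<eta> where "\<eta> > 0" and \<eta>: "\<And>x y. d x y < \<eta> \<Longrightarrow> x \<in> W \<longleftrightarrow> y \<in> W"
      using assms clopen_iff_uniform by blast
    then obtain k where "d x ((h ^^ Suc k) x) < \<eta>"
      using recurrent by blast
    then show ?thesis
      using 0 n \<eta> by auto
  qed (use n in blast)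
  then show "h x \<in> saturation W"
    unfolding saturation_def by (auto simp flip: funpow_swap1)
qed

lemma invariant_clopen_neighbourhood:
  assumes "openin cantor_top U" "invariant U" "x \<in> U"
  obtains S where "clopen S" "invariant S" "x \<in> S" "S \<subseteq> U"
proof -
  obtain W where "clopen W" "x \<in> W" "W \<subseteq> U"
    using clopen_neighbourhood[OF assms(1,3)] .
  then show thesis
    using that[of "saturation W"] clopen_saturation invariant_saturation subset_saturation
      saturation_subset[OF assms(2)] by blast
qed

text \<open>As the orbit closure of \<open>y \<in> A\<close> is nowhere dense, some \<open>z \<in> A\<close> lies outside it; the
  saturation of a small clopen neighbourhood of \<open>y\<close> then misses \<open>z\<close>.\<close>

lemma invariant_clopen_split:
  assumes "clopen A" "invariant A" "A \<noteq> {}"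
  obtains S where "clopen S" "invariant S" "S \<noteq> {}" "S \<subseteq> A" "A - S \<noteq> {}"
proof -
  obtain y where "y \<in> A"
    using assms(3) by blast
  define C where "C = cantor_top closure_of orb y h"
  have "\<not> A \<subseteq> C"
    using nowhere_dense_in_open_subset[OF orbit_nowhere_dense] assms(1,3)
    unfolding clopen_def C_def by blast
  then obtain z where "z \<in> A" "z \<notin> C"
    by blast
  moreover have "openin mtopology (- C)"
    using closedin_closure_of[of cantor_top "orb y h"]
    unfolding C_def mtopology_eq_cantor_top closedin_def by (simp add: Compl_eq_Diff_UNIV)
  ultimately obtain r where "r > 0" and r: "mball z r \<subseteq> - C"
    unfolding openin_mtopology by blast
  have "openin cantor_top (A \<inter> mball y r)"
    using assms(1) open_mball unfolding clopen_def by blast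
  then obtain W where W: "clopen W" "y \<in> W" "W \<subseteq> A \<inter> mball y r"
    using clopen_neighbourhood \<open>y \<in> A\<close> \<open>r > 0\<close> by (metis IntI centre_in_mball_iff UNIV_I)
  have "z \<notin> saturation W"
  proof
    assume "z \<in> saturation W"
    then obtain n where "(h ^^ n) z \<in> W"
      unfolding saturation_def by blast
    obtain w where w: "(h ^^ n) w = y"
      using surj_fn[OF surj_h] by (metis surjD)
    have "w \<in> C"
      using w mem_orbit_closure invariant_iterate[OF invariant_orbit_closure] unfolding C_def by metis
    moreover have "d z w < r"
      using \<open>(h ^^ n) z \<in> W\<close> W(3) isometric_iterate[of n z w] w by (auto simp: commute)
    ultimately show False
      using r by auto
  qed
  then show thesis
    using that[of "saturation W"] W clopen_saturation invariant_saturation subset_saturation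
      saturation_subset[OF assms(2)] \<open>z \<in> A\<close> by blast
qed

definition invariant_partition :: "cantor set \<Rightarrow> (nat \<Rightarrow> cantor set) \<Rightarrow> bool" where
  "invariant_partition A P \<longleftrightarrow>
     (\<forall>c. clopen (P c) \<and> invariant (P c)) \<and> disjoint_family P \<and> (\<Union>c. P c) = A"

lemma invariant_partition_empty: "invariant_partition {} (\<lambda>_. {})"
  by (simp add: invariant_partition_def disjoint_family_on_def)

lemma invariant_partition_case_nat:
  assumes "invariant_partition B Q" "clopen S" "invariant S" "S \<inter> B = {}"
  shows "invariant_partition (S \<union> B) (case_nat S Q)"
proof -
  have "disjoint_family (case_nat S Q)"
    using assms(1,4) unfolding invariant_partition_def disjoint_family_on_def
    by (auto split: nat.splits)
  moreover have "(\<Union>c. case_nat S Q c) = S \<union> (\<Union>c. Q c)"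
    by (auto split: nat.splits)
  ultimately show ?thesis
    using assms unfolding invariant_partition_def by (auto split: nat.splits)
qed

lemma invariant_partition_Least_eq_iff:
  assumes "invariant_partition A P" "x \<in> A"
  shows "(LEAST c. x \<in> P c) = c \<longleftrightarrow> x \<in> P c"
proof -
  obtain c' where c': "x \<in> P c'"
    using assms unfolding invariant_partition_def by blast
  moreover have "x \<in> P c \<Longrightarrow> c = c'" for c
    using assms(1) c' unfolding invariant_partition_def disjoint_family_on_def by blast
  ultimately show ?thesis
    by (metis (mono_tags, lifting) LeastI)
qed

lemma exists_invariant_partition_nonempty:
  assumes "clopen A" "invariant A" "A \<noteq> {}"
  shows "\<exists>P. invariant_partition A P \<and> (\<forall>c\<le>k. P c \<noteq> {})"
  using assms
proof (induction k arbitrary: A)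
  case 0
  have "invariant_partition A (case_nat A (\<lambda>_. {}))"
    using invariant_partition_case_nat[OF invariant_partition_empty, of A] 0 by simp
  then show ?case
    using 0 by (intro exI[of _ "case_nat A (\<lambda>_. {})"]) simp
next
  case (Suc k)
  obtain S where S: "clopen S" "invariant S" "S \<noteq> {}" "S \<subseteq> A" "A - S \<noteq> {}"
    using invariant_clopen_split[OF Suc.prems] .
  have "clopen (A - S)" "invariant (A - S)"
    using Suc.prems S by (simp_all add: clopen_Diff invariant_Diff)
  then obtain Q where Q: "invariant_partition (A - S) Q" "\<forall>c\<le>k. Q c \<noteq> {}"
    using Suc.IH S(5) by blast
  have "S \<union> (A - S) = A"
    using S(4) by blast
  then have "invariant_partition A (case_nat S Q)"
    using invariant_partition_case_nat[OF Q(1) S(1,2)] by force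
  moreover have "case_nat S Q c \<noteq> {}" if "c \<le> Suc k" for c
    using that S(3) Q(2) by (cases c) auto
  ultimately show ?case
    by blast
qed

lemma exists_invariant_partition_avoiding:
  assumes "clopen A" "invariant A" "closedin cantor_top M" "invariant M" "\<not> A \<subseteq> M"
  shows "\<exists>P. invariant_partition A P \<and> M \<inter> A \<subseteq> P 0 \<and> (\<forall>c\<in>{1..k}. P c \<noteq> {})"
proof -
  obtain y where "y \<in> A - M"
    using assms(5) by blast
  moreover have "openin cantor_top (A - M)"
    using assms(1,3) unfolding clopen_def by blast
  ultimately obtain S where S: "clopen S" "invariant S" "S \<noteq> {}" "S \<subseteq> A - M"
    using invariant_clopen_neighbourhood invariant_Diff[OF assms(2,4)] by (metis empty_iff)
  then obtain Q where Q: "invariant_partition S Q" "\<forall>c\<le>k. Q c \<noteq> {}"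
    using exists_invariant_partition_nonempty by blast
  have "invariant_partition ((A - S) \<union> S) (case_nat (A - S) Q)"
    using invariant_partition_case_nat[OF Q(1) clopen_Diff[OF assms(1) S(1)]
        invariant_Diff[OF assms(2) S(2)]] by blast
  moreover have "(A - S) \<union> S = A"
    using S(4) by blast
  ultimately have "invariant_partition A (case_nat (A - S) Q)"
    by simp
  moreover have "M \<inter> A \<subseteq> case_nat (A - S) Q 0"
    using S(4) by auto
  moreover have "case_nat (A - S) Q c \<noteq> {}" if "c \<in> {1..k}" for c
    using that Q(2) by (cases c) auto
  ultimately show ?thesis
    by blast
qed

end

section \<open>Codes, nested intervals and the fence\<close>

lemma Metric_space_max_dist:
  assumes "Metric_space UNIV d"
  shows "Metric_space S (max_dist d)"
proof
  interpret Metric_space UNIV d by fact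
  fix p q r
  have "max_dist d p q = 0 \<longleftrightarrow> d (fst p) (fst q) = 0 \<and> snd p = snd q"
    using nonneg[of "fst p" "fst q"] unfolding max_dist_def by (smt (verit) abs_ge_zero max_def)
  then show "max_dist d p q = 0 \<longleftrightarrow> p = q"
    by (simp add: prod_eq_iff)
  show "max_dist d p r \<le> max_dist d p q + max_dist d q r"
    using triangle[of "fst p" "fst q" "fst r"] by (auto simp: max_dist_def)
  show "0 \<le> max_dist d p q" "max_dist d p q = max_dist d q p"
    by (auto simp: max_dist_def commute abs_minus_commute)
qed

locale fence_construction = isometric_cantor_system +
  fixes K :: "nat \<Rightarrow> cantor set"
  assumes closed_K: "closedin cantor_top (K n)"
    and forward_invariant_K: "h ` K n \<subseteq> K n"
    and nowhere_dense_K: "nowhere_dense_in cantor_top (K n)"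
begin

definition K_upto :: "nat \<Rightarrow> cantor set" where
  "K_upto i = (\<Union>k\<le>i. K k)"

lemma closed_K_upto: "closedin cantor_top (K_upto i)"
  unfolding K_upto_def by (intro closedin_Union) (auto simp: closed_K)

lemma invariant_K_upto: "invariant (K_upto i)"
  using invariant_if_closed_forward_invariant[OF closed_K forward_invariant_K]
  unfolding K_upto_def invariant_def by blast

lemma open_not_subset_K_upto:
  assumes "openin cantor_top U" "U \<noteq> {}"
  shows "\<not> U \<subseteq> K_upto i"
proof (induction i)
  case 0
  then show ?case
    using nowhere_dense_in_open_subset[OF nowhere_dense_K assms(1)] assms(2)
    by (force simp: K_upto_def closure_of_closedin closed_K)
next
  case (Suc i)
  have "openin cantor_top (U - K_upto i)" "U - K_upto i \<noteq> {}"
    using assms(1) closed_K_upto Suc.IH by auto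
  then have "\<not> U - K_upto i \<subseteq> K (Suc i)"
    using nowhere_dense_in_open_subset[OF nowhere_dense_K[of "Suc i"], of "U - K_upto i"]
      closure_of_closedin[OF closed_K[of "Suc i"]] by auto
  moreover have "K_upto (Suc i) = K_upto i \<union> K (Suc i)"
    by (auto simp: K_upto_def le_Suc_eq)
  ultimately show ?case
    by blast
qed

definition resolution :: "nat \<Rightarrow> nat" where
  "resolution l = Suc (l div 2)"

definition level_partition :: "nat \<Rightarrow> cantor set \<Rightarrow> (nat \<Rightarrow> cantor set) \<Rightarrow> bool" where
  "level_partition l F P \<longleftrightarrow> invariant_partition F P \<and> K_upto (l div 2) \<inter> F \<subseteq> P 0 \<and>
     (\<forall>c\<in>{1..(Suc (resolution l))\<^sup>2}. P c \<noteq> {})"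

definition refinement :: "nat \<Rightarrow> cantor set \<Rightarrow> nat \<Rightarrow> cantor set" where
  "refinement l F = (SOME P. level_partition l F P)"

lemma level_partition_refinement:
  assumes "clopen F" "invariant F" "F \<noteq> {}"
  shows "level_partition l F (refinement l F)"
proof -
  have "\<not> F \<subseteq> K_upto (l div 2)"
    using open_not_subset_K_upto assms unfolding clopen_def by blast
  then have "\<exists>P. level_partition l F P"
    using exists_invariant_partition_avoiding[OF assms(1,2) closed_K_upto invariant_K_upto]
    unfolding level_partition_def by (metis Int_commute)
  then show ?thesis
    unfolding refinement_def by (rule someI_ex)
qed

text \<open>The code of a point at an odd level \<open>l\<close> records whether its orbit meets the cylinder with
  index \<open>l div 2\<close>; at an even level \<open>l\<close> it names the piece containing the point in the
  refinement of its node, the set of points sharing its codes below \<open>l\<close>.\<close>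

definition label :: "nat \<Rightarrow> (cantor \<Rightarrow> nat list) \<Rightarrow> cantor \<Rightarrow> nat" where
  "label l \<kappa> x = (if odd l then (if x \<in> saturation (cylinder (from_nat (l div 2))) then 1 else 0)
     else (LEAST c. x \<in> refinement l {y. \<kappa> y = \<kappa> x} c))"

primrec address :: "nat \<Rightarrow> cantor \<Rightarrow> nat list" where
  "address 0 x = []"
| "address (Suc l) x = address l x @ [label l (address l) x]"

definition code :: "cantor \<Rightarrow> nat \<Rightarrow> nat" where
  "code x l = label l (address l) x"

definition node :: "nat \<Rightarrow> cantor \<Rightarrow> cantor set" where
  "node n x = {y. \<forall>j<n. code y j = code x j}"

lemma address_eq_map_code: "address n x = map (code x) [0..<n]"
  by (induction n) (simp_all add: code_def)

lemma mem_node_self [simp]: "x \<in> node n x"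
  by (simp add: node_def)

lemma node_eq_if_mem: "y \<in> node n x \<Longrightarrow> node n y = node n x"
  by (auto simp: node_def)

lemma node_Suc: "node (Suc n) x = node n x \<inter> {y. code y n = code x n}"
  by (auto simp: node_def less_Suc_eq)

lemma node_antimono: "m \<le> n \<Longrightarrow> node n x \<subseteq> node m x"
  by (auto simp: node_def)

lemma code_odd: "odd l \<Longrightarrow> code x l = (if x \<in> saturation (cylinder (from_nat (l div 2))) then 1 else 0)"
  by (simp add: code_def label_def)

lemma code_even: "even l \<Longrightarrow> code x l = (LEAST c. x \<in> refinement l (node l x) c)"
proof -
  have "{y. address l y = address l x} = node l x"
    by (auto simp: address_eq_map_code node_def)
  then show "even l \<Longrightarrow> ?thesis"
    by (simp add: code_def label_def)
qed

lemma code_eq_iff_mem_refinement: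
  assumes "even n" "level_partition n (node n x) (refinement n (node n x))" "y \<in> node n x"
  shows "code y n = c \<longleftrightarrow> y \<in> refinement n (node n x) c"
  using invariant_partition_Least_eq_iff[of "node n x"] assms node_eq_if_mem[OF assms(3)]
  unfolding level_partition_def by (simp add: code_even)

lemma clopen_invariant_node: "clopen (node n x) \<and> invariant (node n x)"
proof (induction n arbitrary: x)
  case 0
  then show ?case
    by (simp add: node_def)
next
  case (Suc n)
  show ?case
  proof (cases "even n")
    case True
    let ?P = "refinement n (node n x)"
    have P: "level_partition n (node n x) ?P"
      using level_partition_refinement Suc.IH mem_node_self by blast
    then have "node (Suc n) x = ?P (code x n)"
      using code_eq_iff_mem_refinement[OF True P] unfolding node_Suc level_partition_def
        invariant_partition_def by blast
    then show ?thesis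
      using P unfolding level_partition_def invariant_partition_def by simp
  next
    case False
    define T where "T = saturation (cylinder (from_nat (n div 2)))"
    have T: "clopen T" "invariant T"
      unfolding T_def by (simp_all add: clopen_saturation invariant_saturation clopen_cylinder)
    have "node (Suc n) x = node n x \<inter> (if x \<in> T then T else UNIV - T)"
      unfolding node_Suc using code_odd[OF False] T_def by auto
    then show ?thesis
      using Suc.IH T by (simp add: clopen_Int clopen_Diff invariant_Int invariant_Diff)
  qed
qed

lemma level_partition_node: "even n \<Longrightarrow> level_partition n (node n x) (refinement n (node n x))"
  using level_partition_refinement clopen_invariant_node mem_node_self by blast

lemma code_iterate [simp]: "code ((h ^^ k) x) n = code x n"
proof -
  have "(h ^^ k) x \<in> node (Suc n) x"
    using invariant_iterate clopen_invariant_node mem_node_self by blast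
  then show ?thesis
    by (simp add: node_def)
qed

lemma code_eq_0_if_mem_K_upto:
  assumes "even n" "x \<in> K_upto (n div 2)"
  shows "code x n = 0"
proof -
  have "x \<in> refinement n (node n x) 0"
    using level_partition_node[OF assms(1), of x] assms(2) mem_node_self[of x n]
    unfolding level_partition_def by blast
  then show ?thesis
    using code_eq_iff_mem_refinement[OF assms(1) level_partition_node[OF assms(1)] mem_node_self]
    by simp
qed

lemma exists_code:
  assumes "even n" "c \<in> {1..(Suc (resolution n))\<^sup>2}"
  shows "\<exists>y\<in>node n x. code y n = c"
proof -
  have P: "level_partition n (node n x) (refinement n (node n x))"
    using level_partition_node[OF assms(1)] .
  then obtain y where "y \<in> refinement n (node n x) c"
    using assms(2) unfolding level_partition_def by blast
  moreover have "y \<in> node n x"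
    using calculation P unfolding level_partition_def invariant_partition_def by blast
  ultimately show ?thesis
    using code_eq_iff_mem_refinement[OF assms(1) P] by blast
qed

lemma exists_prescribed_codes:
  assumes R: "\<And>j. n \<le> j \<Longrightarrow> even j \<Longrightarrow> R j \<in> {1..(Suc (resolution j))\<^sup>2}"
  shows "\<exists>y\<in>node n x. \<forall>j\<ge>n. even j \<longrightarrow> code y j = R j"
proof -
  have "\<exists>y'\<in>node j y. even j \<longrightarrow> code y' j = R j" if "n \<le> j" for j y
    using exists_code R that mem_node_self by blast
  then obtain step where step:
    "\<And>j y. n \<le> j \<Longrightarrow> step j y \<in> node j y \<and> (even j \<longrightarrow> code (step j y) j = R j)"
    by metis
  define p where "p = rec_nat x (\<lambda>i y. step (n + i) y)"
  define C where "C i = node (n + i) (p i)" for i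
  have p_Suc: "p (Suc i) \<in> node (n + i) (p i)"
    "even (n + i) \<Longrightarrow> code (p (Suc i)) (n + i) = R (n + i)" for i
    using step[of "n + i" "p i"] by (simp_all add: p_def)
  have "decseq C"
  proof (rule decseq_SucI)
    fix i
    have "C (Suc i) \<subseteq> node (n + i) (p (Suc i))"
      unfolding C_def by (rule node_antimono) simp
    also have "\<dots> = C i"
      unfolding C_def using node_eq_if_mem[OF p_Suc(1)] .
    finally show "C (Suc i) \<subseteq> C i" .
  qed
  moreover have "closedin cantor_top (C i)" "C i \<noteq> {}" for i
    using clopen_invariant_node[of "n + i" "p i"] mem_node_self[of "p i" "n + i"]
    unfolding C_def clopen_def by blast+
  ultimately have "(\<Inter>i. C i) \<noteq> {}"
    by (intro compact_space_imp_nest[OF compact_space_cantor_top])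
  then obtain y where y: "\<And>i. y \<in> C i"
    by blast
  have "code y j = R j" if "n \<le> j" "even j" for j
  proof -
    obtain i where j: "j = n + i"
      using \<open>n \<le> j\<close> le_Suc_ex by blast
    have "code y j = code (p (Suc i)) j"
      using y[of "Suc i"] unfolding C_def node_def j by simp
    then show ?thesis
      using p_Suc(2)[of i] that j by simp
  qed
  moreover have "y \<in> node n x"
    using y[of 0] by (simp add: C_def p_def)
  ultimately show ?thesis
    by blast
qed

primrec nest :: "cantor \<Rightarrow> nat \<Rightarrow> real \<times> real" where
  "nest x 0 = (0, 1)"
| "nest x (Suc l) = (if even l then shrink (resolution l) (code x l) (nest x l) else nest x l)"

lemma nest_step:
  "fst (nest x n) < snd (nest x n)"
  "fst (nest x n) \<le> fst (nest x (Suc n))"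
  "snd (nest x (Suc n)) \<le> snd (nest x n)"
proof -
  show lt: "fst (nest x n) < snd (nest x n)" for n
    by (induction n) (simp_all add: shrink_nested)
  show "fst (nest x n) \<le> fst (nest x (Suc n))" "snd (nest x (Suc n)) \<le> snd (nest x n)"
    using shrink_nested[OF lt[of n]] by simp_all
qed

lemma incseq_fst_nest: "incseq (\<lambda>n. fst (nest x n))"
  by (rule incseq_SucI) (rule nest_step)

lemma decseq_snd_nest: "decseq (\<lambda>n. snd (nest x n))"
  by (rule decseq_SucI) (rule nest_step)

lemma fst_nest_le_snd_nest: "fst (nest x m) \<le> snd (nest x n)"
proof -
  have "fst (nest x m) \<le> fst (nest x (max m n))"
    using incseq_fst_nest by (simp add: incseq_def)
  also have "\<dots> \<le> snd (nest x (max m n))"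
    using nest_step(1) less_imp_le by blast
  also have "\<dots> \<le> snd (nest x n)"
    using decseq_snd_nest by (simp add: decseq_def)
  finally show ?thesis .
qed

lemma nest_unit_interval: "0 \<le> fst (nest x n)" "snd (nest x n) \<le> 1"
  using incseqD[OF incseq_fst_nest[of x], of 0 n] decseqD[OF decseq_snd_nest[of x], of 0 n]
  by simp_all

lemma nest_eq_if_mem_node: "y \<in> node n x \<Longrightarrow> nest y n = nest x n"
  by (induction n) (auto simp: node_Suc)

definition phiL :: "cantor \<Rightarrow> real" where
  "phiL x = (SUP n. fst (nest x n))"

definition phiU :: "cantor \<Rightarrow> real" where
  "phiU x = (INF n. snd (nest x n))"

lemma bdd_above_fst_nest: "bdd_above (range (\<lambda>n. fst (nest x n)))"
  using fst_nest_le_snd_nest[of x _ 0] by (intro bdd_aboveI) auto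

lemma bdd_below_snd_nest: "bdd_below (range (\<lambda>n. snd (nest x n)))"
  using fst_nest_le_snd_nest[of x 0] by (intro bdd_belowI) auto

lemma fst_nest_le_phiL: "fst (nest x n) \<le> phiL x"
  unfolding phiL_def using bdd_above_fst_nest by (rule cSUP_upper2) auto

lemma phiU_le_snd_nest: "phiU x \<le> snd (nest x n)"
  unfolding phiU_def using bdd_below_snd_nest by (rule cINF_lower2) auto

lemma phiL_le_snd_nest: "phiL x \<le> snd (nest x n)"
  unfolding phiL_def by (rule cSUP_least) (auto simp: fst_nest_le_snd_nest)

lemma phiL_le_phiU: "phiL x \<le> phiU x"
  unfolding phiU_def by (rule cINF_greatest) (auto simp: phiL_le_snd_nest)

lemma phiL_nonneg: "0 \<le> phiL x" and phiU_le_1: "phiU x \<le> 1"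
  using fst_nest_le_phiL[of x 0] phiU_le_snd_nest[of x 0] by simp_all

lemma phi_eq_if_codes_eq:
  assumes "\<And>j. code y j = code x j"
  shows "phiL y = phiL x" "phiU y = phiU x"
proof -
  have "nest y n = nest x n" for n
    using assms by (intro nest_eq_if_mem_node) (simp add: node_def)
  then show "phiL y = phiL x" "phiU y = phiU x"
    unfolding phiL_def phiU_def by simp_all
qed

lemma phi_iterate: "phiL ((h ^^ k) x) = phiL x" "phiU ((h ^^ k) x) = phiU x"
  using phi_eq_if_codes_eq[of "(h ^^ k) x" x] by simp_all

lemma openin_nest_preimage: "openin cantor_top {x. P (nest x n)}"
proof (subst openin_subopen, intro ballI)
  fix x
  assume "x \<in> {x. P (nest x n)}"
  then have "node n x \<subseteq> {x. P (nest x n)}"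
    using nest_eq_if_mem_node by auto
  then show "\<exists>T. openin cantor_top T \<and> x \<in> T \<and> T \<subseteq> {x. P (nest x n)}"
    using clopen_invariant_node[of n x] mem_node_self[of x n] unfolding clopen_def by blast
qed

lemma lsc_phiL: "lsc_on cantor_top phiL"
  unfolding lsc_on_def
proof
  fix a
  have "{x \<in> topspace cantor_top. a < phiL x} = (\<Union>n. {x. a < fst (nest x n)})"
    unfolding phiL_def using less_cSUP_iff[OF _ bdd_above_fst_nest] by auto
  then show "openin cantor_top {x \<in> topspace cantor_top. a < phiL x}"
    using openin_nest_preimage by (auto intro!: openin_Union)
qed

lemma usc_phiU: "usc_on cantor_top phiU"
  unfolding usc_on_def
proof
  fix a
  have "{x \<in> topspace cantor_top. phiU x < a} = (\<Union>n. {x. snd (nest x n) < a})"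
    unfolding phiU_def using cINF_less_iff[OF _ bdd_below_snd_nest] by auto
  then show "openin cantor_top {x \<in> topspace cantor_top. phiU x < a}"
    using openin_nest_preimage by (auto intro!: openin_Union)
qed

lemma admissible_phi: "admissible phiL phiU"
  unfolding admissible_def
  using phiL_nonneg phiU_le_1 phiL_le_phiU lsc_phiL usc_phiU by (meson order_trans)

text \<open>From level \<open>2 k\<close> on, a point of \<open>K k\<close> has code 0 at every even level, so its interval is
  halved infinitely often.\<close>

lemma phiL_eq_phiU_on_K:
  assumes "x \<in> K k"
  shows "phiL x = phiU x"
proof (rule ccontr)
  define w where "w n = snd (nest x n) - fst (nest x n)" for n
  assume "phiL x \<noteq> phiU x"
  then have "phiU x - phiL x > 0"
    using phiL_le_phiU[of x] by simp
  then obtain j where j: "(1/2::real) ^ j < phiU x - phiL x"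
    using real_arch_pow_inv[of "phiU x - phiL x" "1/2"] by auto
  have halve: "w (Suc (2 * i)) = w (2 * i) / 2" if "k \<le> i" for i
  proof -
    have "x \<in> K_upto i"
      using assms that unfolding K_upto_def by auto
    then have "code x (2 * i) = 0"
      using code_eq_0_if_mem_K_upto[of "2 * i"] by simp
    then show ?thesis
      by (simp add: w_def shrink_0 field_simps)
  qed
  have "w (2 * (k + i)) \<le> (1/2) ^ i" for i
  proof (induction i)
    case 0
    show ?case
      using nest_unit_interval[of x "2 * k"] by (simp add: w_def)
  next
    case (Suc i)
    have "w (2 * (k + Suc i)) \<le> w (Suc (2 * (k + i)))"
      using nest_step[of x "Suc (2 * (k + i))"] unfolding w_def by simp
    also have "\<dots> = w (2 * (k + i)) / 2"
      using halve[of "k + i"] by simp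
    also have "\<dots> \<le> (1/2) ^ Suc i"
      using Suc by simp
    finally show ?case .
  qed
  moreover have "phiU x - phiL x \<le> w (2 * (k + j))"
    using phiU_le_snd_nest[of x] fst_nest_le_phiL[of x] unfolding w_def by (smt (verit))
  ultimately show False
    using j by (smt (verit))
qed

lemma phi_eq_nest_if_codes_keep:
  assumes "\<And>j. n \<le> j \<Longrightarrow> even j \<Longrightarrow> code y j \<in> {1, 2}"
  shows "phiL y = fst (nest y n)" "phiU y = snd (nest y n)"
proof -
  have const: "nest y j = nest y n" if "n \<le> j" for j
    using that
  proof (induction j)
    case (Suc j)
    then show ?case
      using assms[of j] shrink_keep by (cases "n = Suc j") auto
  qed simp
  have "fst (nest y k) \<le> fst (nest y n)" for k
    using incseq_fst_nest[of y] const[of "max k n"] unfolding incseq_def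
    by (metis max.cobounded1 max.cobounded2)
  then show "phiL y = fst (nest y n)"
    using fst_nest_le_phiL[of y n] unfolding phiL_def by (intro antisym cSUP_least) auto
  have "snd (nest y n) \<le> snd (nest y k)" for k
    using decseq_snd_nest[of y] const[of "max k n"] unfolding decseq_def
    by (metis max.cobounded1 max.cobounded2)
  then show "phiU y = snd (nest y n)"
    using phiU_le_snd_nest[of y n] unfolding phiU_def by (intro antisym cINF_greatest) auto
qed

lemma exists_point_with_grid_interval:
  assumes "even l" "p < r" "r \<le> resolution l"
  obtains y where "y \<in> node l x" "code y (l + 2) \<noteq> code x (l + 2)"
    "phiL y = fst (nest x l) + (snd (nest x l) - fst (nest x l)) * p / resolution l"
    "phiU y = fst (nest x l) + (snd (nest x l) - fst (nest x l)) * r / resolution l"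
proof -
  define m where "m = resolution l"
  \<comment> \<open>Codes 1 and 2 both freeze the interval; the one differing from \<open>code x (l + 2)\<close> makes \<open>y \<noteq> x\<close>.\<close>
  define keep :: nat where "keep = (if code x (l + 2) = 1 then 2 else 1)"
  define R where "R j = (if j = l then grid_code m p r else if j = l + 2 then keep else 1)" for j
  have "R j \<in> {1..(Suc (resolution j))\<^sup>2}" if "l \<le> j" for j
  proof -
    have "4 \<le> (Suc (resolution j))\<^sup>2"
      unfolding resolution_def power2_eq_square by simp
    moreover have "grid_code m p r \<le> (Suc m)\<^sup>2"
      using grid_code_le assms(2,3) unfolding m_def by simp
    ultimately show ?thesis
      by (auto simp: R_def keep_def grid_code_def m_def)
  qed
  then obtain y where y: "y \<in> node l x" and code_y: "\<And>j. l \<le> j \<Longrightarrow> even j \<Longrightarrow> code y j = R j"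
    using exists_prescribed_codes by blast
  have "nest y (Suc l) = shrink m (grid_code m p r) (nest x l)"
    using code_y[of l] nest_eq_if_mem_node[OF y] assms(1) by (simp add: R_def m_def)
  also have "\<dots> = (fst (nest x l) + (snd (nest x l) - fst (nest x l)) * p / m,
      fst (nest x l) + (snd (nest x l) - fst (nest x l)) * r / m)"
    using shrink_grid_code[OF assms(2)] assms(3) unfolding m_def by (cases "nest x l") simp
  finally have "nest y (Suc l) = \<dots>" .
  moreover have "code y j \<in> {1, 2}" if "Suc l \<le> j" "even j" for j
    using code_y[of j] that by (auto simp: R_def keep_def)
  moreover have "code y (l + 2) \<noteq> code x (l + 2)"
    using code_y[of "l + 2"] assms(1) by (simp add: R_def keep_def)
  ultimately show thesis
    using that y phi_eq_nest_if_codes_keep[of "Suc l" y] unfolding m_def by simp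
qed

lemma orbit_enters_cylinder:
  assumes "x \<in> cylinder bs" "code y (Suc (2 * to_nat bs)) = code x (Suc (2 * to_nat bs))"
  obtains k where "(h ^^ k) y \<in> cylinder bs"
proof -
  have "x \<in> saturation (cylinder bs)"
    using assms(1) subset_saturation by blast
  then have "y \<in> saturation (cylinder bs)"
    using assms(2) code_odd[of "Suc (2 * to_nat bs)"] by (auto split: if_splits)
  then show thesis
    using that unfolding saturation_def by blast
qed

lemma exists_fine_even_level:
  assumes "e > 0"
  obtains l where "even l" "n < l" "1 / real (resolution l) < e"
proof -
  obtain k :: nat where "k > 0" "inverse (real k) < e"
    using ex_inverse_of_nat_less[OF assms] by auto
  moreover have "1 / real (resolution (2 * (n + k))) \<le> inverse (real k)"
    using \<open>k > 0\<close> by (simp add: resolution_def divide_simps)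
  ultimately show thesis
    using that[of "2 * (n + k)"] by auto
qed

lemma exists_nearby_point_with_close_fiber:
  assumes "phiL x \<le> s" "s \<le> t" "t \<le> phiU x" "e > 0"
  obtains z where "z \<noteq> x" "d x z < e" "phiL z < phiU z" "\<bar>phiL z - s\<bar> \<le> e" "\<bar>phiU z - t\<bar> \<le> e"
proof -
  obtain N where N: "cylinder (map x [0..<N]) \<subseteq> mball x e"
    using cylinder_subset_open[OF open_mball, of x x e] assms(4) by auto
  define bs where "bs = map x [0..<N]"
  obtain l where l: "even l" "Suc (2 * to_nat bs) < l" "1 / real (resolution l) < e"
    using exists_fine_even_level[OF assms(4)] by blast
  define m where "m = resolution l"
  have "1 \<le> m" "1 / m < e"
    using l(3) by (simp_all add: m_def resolution_def)
  define a b where "a = fst (nest x l)" and "b = snd (nest x l)"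
  have ab: "a < b" "a \<le> s" "t \<le> b" "b - a \<le> 1"
    using nest_step(1)[of x l] fst_nest_le_phiL[of x l] phiU_le_snd_nest[of x l] assms(1,3)
      nest_unit_interval[of x l] unfolding a_def b_def by auto
  obtain p r where pr: "p < r" "r \<le> m"
    "\<bar>a + (b - a) * p / m - s\<bar> \<le> (b - a) / m" "\<bar>a + (b - a) * r / m - t\<bar> \<le> (b - a) / m"
    using grid_interval_approx[OF ab(1,2) assms(2) ab(3) \<open>1 \<le> m\<close>] by blast
  obtain y where y: "y \<in> node l x" "code y (l + 2) \<noteq> code x (l + 2)"
    "phiL y = a + (b - a) * p / m" "phiU y = a + (b - a) * r / m"
    using exists_point_with_grid_interval[OF l(1) pr(1,2)[unfolded m_def]]
    unfolding a_def b_def m_def by blast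
  have "code y (Suc (2 * to_nat bs)) = code x (Suc (2 * to_nat bs))"
    using y(1) l(2) by (simp add: node_def)
  then obtain k where z: "(h ^^ k) y \<in> cylinder bs"
    using orbit_enters_cylinder[of x bs y] unfolding bs_def by auto
  have "(b - a) / m \<le> 1 / m"
    using ab(4) by (simp add: divide_right_mono)
  moreover have "(b - a) * p / m < (b - a) * r / m"
    using ab(1) pr(1) \<open>1 \<le> m\<close> by (simp add: divide_strict_right_mono)
  moreover have "(h ^^ k) y \<noteq> x"
    using y(2) by auto
  moreover have "d x ((h ^^ k) y) < e"
    using z N unfolding bs_def by auto
  ultimately show thesis
    using that[of "(h ^^ k) y"] y(3,4) pr(3,4) \<open>1 / m < e\<close> phi_iterate by auto
qed

lemma fence_fiber_eq: "fence_fiber phiL phiU x = {phiL x..phiU x}"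
  using phiL_nonneg[of x] phiU_le_1[of x] by (auto simp: fence_fiber_def fence_def)

lemma fraisse_fence_phi: "fraisse_fence phiL phiU"
  unfolding fraisse_fence_def
proof (intro allI impI)
  fix x I
  assume I: "continuum I \<and> I \<subseteq> fence_fiber phiL phiU x"
  then obtain s t where st: "I = {s..t}" "s \<le> t"
    using connected_compact_interval_1 unfolding continuum_def by (metis atLeastatMost_empty_iff)
  then have "phiL x \<le> s" "t \<le> phiU x"
    using I unfolding fence_fiber_eq by auto
  then have "\<exists>z. z \<noteq> x \<and> d x z < 1 / Suc k \<and> phiL z < phiU z \<and>
      \<bar>phiL z - s\<bar> \<le> 1 / Suc k \<and> \<bar>phiU z - t\<bar> \<le> 1 / Suc k" for k
    using exists_nearby_point_with_close_fiber[of x s t "1 / Suc k"] st(2) by auto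
  then obtain xs where xs: "\<And>k. xs k \<noteq> x" "\<And>k. d x (xs k) < 1 / Suc k"
    "\<And>k. phiL (xs k) < phiU (xs k)"
    "\<And>k. \<bar>phiL (xs k) - s\<bar> \<le> 1 / Suc k" "\<And>k. \<bar>phiU (xs k) - t\<bar> \<le> 1 / Suc k"
    by metis
  have "(\<lambda>k. d (xs k) x) \<longlonglongrightarrow> 0"
    using xs(2) nonneg by (intro tendsto_sandwich[OF _ _ tendsto_const LIMSEQ_inverse_real_of_nat])
      (auto simp: commute inverse_eq_divide less_imp_le)
  then have "limitin cantor_top xs x sequentially"
    unfolding mtopology_eq_cantor_top[symmetric] limitin_metric_dist_null by simp
  moreover have "nondegenerate_arc (fence_fiber phiL phiU (xs k))" for k
    unfolding nondegenerate_arc_def fence_fiber_eq using xs(3)[of k]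
    by (intro exI[of _ "linepath (phiL (xs k)) (phiU (xs k))"])
      (simp add: closed_segment_eq_real_ivl)
  moreover have "(\<lambda>k. hausdist (fence_fiber phiL phiU (xs k)) I) \<longlonglongrightarrow> 0"
    unfolding fence_fiber_eq st(1) using xs(3,4,5) st(2)
    by (intro hausdist_intervals_tendsto_0) (auto simp: less_imp_le)
  ultimately show "\<exists>xs. (\<forall>k. xs k \<noteq> x) \<and> limitin cantor_top xs x sequentially \<and>
      (\<forall>k. nondegenerate_arc (fence_fiber phiL phiU (xs k))) \<and>
      (\<lambda>k. hausdist (fence_fiber phiL phiU (xs k)) I) \<longlonglongrightarrow> 0"
    using xs(1) by blast
qed

lemma Metric_space_fence: "Metric_space (fence phiL phiU) (max_dist d)"
  by (rule Metric_space_max_dist) unfold_locales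

lemma topspace_fence_top: "topspace (fence_top d phiL phiU) = fence phiL phiU"
  unfolding fence_top_def using Metric_space.topspace_mtopology[OF Metric_space_fence] .

lemma max_dist_map_prod_h: "max_dist d (map_prod h id p) (map_prod h id q) = max_dist d p q"
  by (simp add: max_dist_def isometric_h map_prod_def case_prod_unfold)

lemma map_prod_h_fence: "map_prod h id ` fence phiL phiU = fence phiL phiU"
proof -
  have "(x, t) \<in> map_prod h id ` fence phiL phiU" if "(x, t) \<in> fence phiL phiU" for x t
  proof -
    obtain w where "h w = x"
      using surj_h by (metis surjD)
    then have "(w, t) \<in> fence phiL phiU"
      using that phi_iterate[of 1 w] by (simp add: fence_def)
    then show ?thesis
      using \<open>h w = x\<close> by force
  qed
  moreover have "map_prod h id p \<in> fence phiL phiU" if "p \<in> fence phiL phiU" for p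
    using that phi_iterate[of 1 "fst p"] by (auto simp: fence_def)
  ultimately show ?thesis
    by auto
qed

lemma homeomorphic_map_prod_h:
  "homeomorphic_map (fence_top d phiL phiU) (fence_top d phiL phiU) (map_prod h id)"
proof -
  interpret Metric_space12 "fence phiL phiU" "max_dist d" "fence phiL phiU" "max_dist d"
    using Metric_space_fence by (simp add: Metric_space12_def)
  show ?thesis
    unfolding fence_top_def
    by (rule isometry_imp_homeomorphic_map) (simp_all add: map_prod_h_fence max_dist_map_prod_h)
qed

lemma is_factor_map_prod_h: "is_factor (fence_top d phiL phiU) (map_prod h id) h"
  unfolding is_factor_def
proof (intro exI conjI)
  show "continuous_map (fence_top d phiL phiU) cantor_top fst"
    unfolding fence_top_def mtopology_eq_cantor_top[symmetric]
      Metric_space.metric_continuous_map[OF Metric_space_fence Metric_space_axioms]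
    by (force simp: max_dist_def)
  have "(x, phiL x) \<in> fence phiL phiU" for x
    using phiL_nonneg[of x] phiL_le_phiU[of x] phiU_le_1[of x] by (simp add: fence_def)
  then show "fst ` topspace (fence_top d phiL phiU) = UNIV"
    unfolding topspace_fence_top by (metis UNIV_eq_I fst_conv image_eqI)
qed (simp add: topspace_fence_top)

lemma exists_fraisse_fence_over_h:
  "\<exists>phiL phiU hh. admissible phiL phiU \<and> fraisse_fence phiL phiU \<and>
     homeomorphic_map (fence_top d phiL phiU) (fence_top d phiL phiU) hh \<and>
     (\<forall>p\<in>fence phiL phiU. \<forall>q\<in>fence phiL phiU. max_dist d (hh p) (hh q) = max_dist d p q) \<and>
     is_factor (fence_top d phiL phiU) hh h \<and>
     (\<forall>x \<in> (\<Union>n. K n). phiL x = phiU x)"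
  using admissible_phi fraisse_fence_phi homeomorphic_map_prod_h max_dist_map_prod_h
    is_factor_map_prod_h phiL_eq_phiU_on_K by blast

end

lemma exists_fraisse_fence_over_isometry:
  fixes K :: "nat \<Rightarrow> cantor set"
  assumes "compatible_metric d"
    and "homeomorphic_map cantor_top cantor_top h"
    and "\<forall>x y. d (h x) (h y) = d x y"
    and "\<forall>x. nowhere_dense_in cantor_top (orb x h)"
    and "\<forall>n. closedin cantor_top (K n) \<and> h ` K n \<subseteq> K n \<and> nowhere_dense_in cantor_top (K n)"
  shows "\<exists>phiL phiU hh. admissible phiL phiU \<and> fraisse_fence phiL phiU \<and>
     homeomorphic_map (fence_top d phiL phiU) (fence_top d phiL phiU) hh \<and>
     (\<forall>p\<in>fence phiL phiU. \<forall>q\<in>fence phiL phiU. max_dist d (hh p) (hh q) = max_dist d p q) \<and>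
     is_factor (fence_top d phiL phiU) hh h \<and>
     (\<forall>x \<in> (\<Union>n. K n). phiL x = phiU x)"
proof -
  have "fence_construction d h K"
    using assms unfolding compatible_metric_def fence_construction_def
      fence_construction_axioms_def isometric_cantor_system_def isometric_cantor_system_axioms_def
    by blast
  then show ?thesis
    by (rule fence_construction.exists_fraisse_fence_over_h)
qed

theorem theorem6p4:
  fixes d :: "cantor \<Rightarrow> cantor \<Rightarrow> real" and h :: "cantor \<Rightarrow> cantor"
  assumes "compatible_metric d"
    and "homeomorphic_map cantor_top cantor_top h"
    and "\<forall>x y. d (h x) (h y) = d x y"
    and "\<forall>x. nowhere_dense_in cantor_top (orb x h)"
  shows "(\<exists>phiL phiU hh. admissible phiL phiU \<and> fraisse_fence phiL phiU \<and>
            homeomorphic_map (fence_top d phiL phiU) (fence_top d phiL phiU) hh \<and>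
            (\<forall>p\<in>fence phiL phiU. \<forall>q\<in>fence phiL phiU. max_dist d (hh p) (hh q) = max_dist d p q) \<and>
            is_factor (fence_top d phiL phiU) hh h)
       \<and> (\<forall>K :: nat \<Rightarrow> cantor set.
            (\<forall>n. closedin cantor_top (K n) \<and> h ` K n \<subseteq> K n \<and> nowhere_dense_in cantor_top (K n)) \<longrightarrow>
            (\<exists>phiL phiU hh. admissible phiL phiU \<and> fraisse_fence phiL phiU \<and>
              homeomorphic_map (fence_top d phiL phiU) (fence_top d phiL phiU) hh \<and>
              (\<forall>p\<in>fence phiL phiU. \<forall>q\<in>fence phiL phiU. max_dist d (hh p) (hh q) = max_dist d p q) \<and>
              is_factor (fence_top d phiL phiU) hh h \<and>
              (\<forall>x \<in> (\<Union>n. K n). phiL x = phiU x)))"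
proof -
  have no_K: "\<forall>n. closedin cantor_top {} \<and> h ` {} \<subseteq> {} \<and> nowhere_dense_in cantor_top {}"
    by (simp add: nowhere_dense_in_def)
  show ?thesis
    using exists_fraisse_fence_over_isometry[OF assms]
      exists_fraisse_fence_over_isometry[OF assms no_K] by blast
qed

end
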